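(* For every $\theta\in[0,\pi)$, $\min_{\mathcal A}\mathscr J^\theta_S=\ell\,\bar e_S$, the minimum is attained, and $(d_1,d_2,d_3)\in\mathcal A$ is a minimiser if and only if $$(d_1'\cdot d_3,\ d_2'\cdot d_3)=\frac k2\big(-1-\cos2\theta,\ \sin2\theta\big)\quad\text{a.e. in } I.$$
   Context: Fix constants $c_1>0$, $c_2>0$, $c:=c_1+c_2$, $k>0$, $\bar e_S\ge0$, $\theta\in[0,\pi)$, $\ell>0$, $I=(-\ell/2,\ell/2)$. Let $\bar A^\theta_S:=k\begin{pmatrix}-\cos^2\theta&\sin\theta\cos\theta\\ \sin\theta\cos\theta&-\sin^2\theta\end{pmatrix}$. For matrices $M\cdot N={\rm tr}(M^{\rm T}N)$, $|M|^2=M\cdot M$. For $M\in\mathbb{R}^{2\times2}_{\rm sym}$, $L^\theta_S(M):=-2c_1M\cdot\bar A^\theta_S+2c_2k\,{\rm tr}M+ck^2+\bar e_S$. $\overline Q^{\,\theta}_S(\alpha,\beta):=\min_{\gamma\in\mathbb{R}}\{c|M|^2+2c|\det M|+L^\theta_S(M): M=\begin{pmatrix}\alpha&\beta\\ \beta&\gamma\end{pmatrix}\}$. $\mathcal A:=\{(d_1,d_2,d_3): (d_1|d_2|d_3)\in W^{1,2}(I,{\rm SO}(3)),\ d_1'\cdot d_2=0 \text{ a.e. in } I\}$ and $\mathscr J^\theta_S(d_1,d_2,d_3):=\int_I\overline Q^{\,\theta}_S(d_1'\cdot d_3,d_2'\cdot d_3)\,dx_1$. *)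

theory Defs
  imports "HOL-Analysis.Analysis"
begin

definition intI :: "real \<Rightarrow> real set" where
  "intI l = {-l/2<..<l/2}"

definition smooth_fun :: "(real \<Rightarrow> real) \<Rightarrow> bool" where
  "smooth_fun \<phi> \<longleftrightarrow>
     (\<exists>D. D 0 = \<phi> \<and> (\<forall>n x. (D n has_real_derivative D (Suc n) x) (at x)))"

definition test_fun :: "real set \<Rightarrow> (real \<Rightarrow> real) \<Rightarrow> bool" where
  "test_fun U \<phi> \<longleftrightarrow> smooth_fun \<phi> \<and> compact (closure {x. \<phi> x \<noteq> 0})
      \<and> closure {x. \<phi> x \<noteq> 0} \<subseteq> U"

definition L2_on :: "real set \<Rightarrow> (real \<Rightarrow> 'a::euclidean_space) \<Rightarrow> bool" where
  "L2_on U f \<longleftrightarrow> set_borel_measurable lebesgue U f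
      \<and> set_integrable lebesgue U (\<lambda>x. (norm (f x))\<^sup>2)"

definition has_weak_deriv_on ::
  "real set \<Rightarrow> (real \<Rightarrow> 'a::euclidean_space) \<Rightarrow> (real \<Rightarrow> 'a) \<Rightarrow> bool" where
  "has_weak_deriv_on U u g \<longleftrightarrow>
     (\<forall>K. compact K \<and> K \<subseteq> U \<longrightarrow> set_integrable lebesgue K u \<and> set_integrable lebesgue K g)
     \<and> (\<forall>\<phi>. test_fun U \<phi> \<longrightarrow>
          (LINT x:U|lebesgue. deriv \<phi> x *\<^sub>R u x) = - (LINT x:U|lebesgue. \<phi> x *\<^sub>R g x))"

definition W12_with_deriv ::
  "real set \<Rightarrow> (real \<Rightarrow> 'a::euclidean_space) \<Rightarrow> (real \<Rightarrow> 'a) \<Rightarrow> bool" where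
  "W12_with_deriv U u g \<longleftrightarrow> L2_on U u \<and> L2_on U g \<and> has_weak_deriv_on U u g"

definition frame :: "real^3 \<Rightarrow> real^3 \<Rightarrow> real^3 \<Rightarrow> real^3^3" where
  "frame a b c = (\<chi> i j. if j = 1 then a $ i else if j = 2 then b $ i else c $ i)"

definition admissible ::
  "real \<Rightarrow> (real \<Rightarrow> real^3) \<Rightarrow> (real \<Rightarrow> real^3) \<Rightarrow> (real \<Rightarrow> real^3)
     \<Rightarrow> (real \<Rightarrow> real^3) \<Rightarrow> (real \<Rightarrow> real^3) \<Rightarrow> (real \<Rightarrow> real^3) \<Rightarrow> bool" where
  "admissible l d1 d2 d3 d1' d2' d3' \<longleftrightarrow>
     W12_with_deriv (intI l) d1 d1' \<and> W12_with_deriv (intI l) d2 d2'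
     \<and> W12_with_deriv (intI l) d3 d3'
     \<and> (AE x in lebesgue. x \<in> intI l \<longrightarrow> rotation_matrix (frame (d1 x) (d2 x) (d3 x)))
     \<and> (AE x in lebesgue. x \<in> intI l \<longrightarrow> d1' x \<bullet> d2 x = 0)"

definition frob :: "real^2^2 \<Rightarrow> real^2^2 \<Rightarrow> real" where
  "frob M N = trace (transpose M ** N)"

definition Abar :: "real \<Rightarrow> real \<Rightarrow> real^2^2" where
  "Abar k \<theta> = (\<chi> i j. if i = 1 \<and> j = 1 then - k * (cos \<theta>)\<^sup>2
                      else if i = 2 \<and> j = 2 then - k * (sin \<theta>)\<^sup>2
                      else k * sin \<theta> * cos \<theta>)"

definition LS :: "real \<Rightarrow> real \<Rightarrow> real \<Rightarrow> real \<Rightarrow> real \<Rightarrow> real^2^2 \<Rightarrow> real" where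
  "LS c1 c2 k eS \<theta> M =
     - 2 * c1 * frob M (Abar k \<theta>) + 2 * c2 * k * trace M + (c1 + c2) * k\<^sup>2 + eS"

definition symM :: "real \<Rightarrow> real \<Rightarrow> real \<Rightarrow> real^2^2" where
  "symM \<alpha> \<beta> \<gamma> = (\<chi> i j. if i = 1 \<and> j = 1 then \<alpha> else if i = 2 \<and> j = 2 then \<gamma> else \<beta>)"

text \<open>Qbar_S^theta(alpha,beta) = min over gamma (the infimum; it is attained).\<close>
definition Qbar :: "real \<Rightarrow> real \<Rightarrow> real \<Rightarrow> real \<Rightarrow> real \<Rightarrow> real \<Rightarrow> real \<Rightarrow> real" where
  "Qbar c1 c2 k eS \<theta> \<alpha> \<beta> =
     (INF \<gamma>\<in>UNIV. (let M = symM \<alpha> \<beta> \<gamma> in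
        (c1 + c2) * frob M M + 2 * (c1 + c2) * \<bar>det M\<bar> + LS c1 c2 k eS \<theta> M))"

definition JS :: "real \<Rightarrow> real \<Rightarrow> real \<Rightarrow> real \<Rightarrow> real \<Rightarrow> real
     \<Rightarrow> (real \<Rightarrow> real^3) \<Rightarrow> (real \<Rightarrow> real^3) \<Rightarrow> (real \<Rightarrow> real^3) \<Rightarrow> real" where
  "JS c1 c2 k eS \<theta> l d1' d2' d3 =
     (LINT x:intI l|lebesgue. Qbar c1 c2 k eS \<theta> (d1' x \<bullet> d3 x) (d2' x \<bullet> d3 x))"

end

theory Submission
  imports Defs
begin

text \<open>For a symmetric \<open>M\<close>, expanding the square around \<open>Abar\<close> gives
  \<open>c|M|\<^sup>2 + 2c|det M| + L(M)
     = eS + c1|M - Abar|\<^sup>2 + 2 c1 |det M| + c2 (|M|\<^sup>2 + 2|det M| + 2k tr M + k\<^sup>2)\<close>,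
  and the last bracket is at least \<open>(tr M + k)\<^sup>2\<close> because \<open>|M|\<^sup>2 + 2 det M = (tr M)\<^sup>2\<close>.
  Hence \<open>Qbar(\<alpha>, \<beta>) \<ge> eS\<close>, with equality exactly at the entries \<open>(Abar\<^sub>1\<^sub>1, Abar\<^sub>1\<^sub>2)\<close>,
  where \<open>\<gamma> = Abar\<^sub>2\<^sub>2\<close> is optimal because \<open>det Abar = 0\<close> and \<open>tr Abar = -k\<close>.
  Integrating, \<open>J \<ge> \<ell> eS\<close> with equality iff the strains take these values a.e.
  The bound is attained by the frame that rotates rigidly with angular speed \<open>k cos \<theta>\<close>
  about the fixed axis \<open>(sin \<theta>, cos \<theta>, 0)\<close>.\<close>

definition energy_density ::
  "real \<Rightarrow> real \<Rightarrow> real \<Rightarrow> real \<Rightarrow> real \<Rightarrow> real \<Rightarrow> real \<Rightarrow> real \<Rightarrow> real" where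
  "energy_density c1 c2 k eS \<theta> \<alpha> \<beta> \<gamma> =
     (c1 + c2) * (\<alpha>\<^sup>2 + 2 * \<beta>\<^sup>2 + \<gamma>\<^sup>2) + 2 * (c1 + c2) * \<bar>\<alpha> * \<gamma> - \<beta>\<^sup>2\<bar>
     - 2 * c1 * k * (- \<alpha> * (cos \<theta>)\<^sup>2 + 2 * \<beta> * sin \<theta> * cos \<theta> - \<gamma> * (sin \<theta>)\<^sup>2)
     + 2 * c2 * k * (\<alpha> + \<gamma>) + (c1 + c2) * k\<^sup>2 + eS"

lemma Qbar_eq_INF_energy_density:
  "Qbar c1 c2 k eS \<theta> \<alpha> \<beta> = (INF \<gamma>. energy_density c1 c2 k eS \<theta> \<alpha> \<beta> \<gamma>)"
proof -
  have "(let M = symM \<alpha> \<beta> \<gamma> in (c1 + c2) * frob M M + 2 * (c1 + c2) * \<bar>det M\<bar> + LS c1 c2 k eS \<theta> M)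
      = energy_density c1 c2 k eS \<theta> \<alpha> \<beta> \<gamma>" for \<gamma>
    by (simp add: Let_def frob_def trace_def matrix_matrix_mult_def transpose_def symM_def Abar_def
        sum_2 det_2 LS_def energy_density_def power2_eq_square algebra_simps)
  then show ?thesis
    unfolding Qbar_def by simp
qed

lemma energy_density_ge:
  assumes "c1 > 0" "c2 > 0"
  shows "eS + c1 * ((\<alpha> + k * (cos \<theta>)\<^sup>2)\<^sup>2 + 2 * (\<beta> - k * sin \<theta> * cos \<theta>)\<^sup>2)
    \<le> energy_density c1 c2 k eS \<theta> \<alpha> \<beta> \<gamma>"
proof -
  define d where "d = \<alpha> * \<gamma> - \<beta>\<^sup>2"
  have trig: "(sin \<theta>)\<^sup>2 + (cos \<theta>)\<^sup>2 = 1"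
    by simp
  have "energy_density c1 c2 k eS \<theta> \<alpha> \<beta> \<gamma> = eS
      + c1 * ((\<alpha> + k * (cos \<theta>)\<^sup>2)\<^sup>2 + 2 * (\<beta> - k * sin \<theta> * cos \<theta>)\<^sup>2)
      + c1 * (\<gamma> + k * (sin \<theta>)\<^sup>2)\<^sup>2 + 2 * c1 * \<bar>d\<bar> + c2 * ((\<alpha> + \<gamma> + k)\<^sup>2 + 2 * (\<bar>d\<bar> - d))"
    unfolding energy_density_def d_def using trig by algebra
  moreover have "0 \<le> c2 * ((\<alpha> + \<gamma> + k)\<^sup>2 + 2 * (\<bar>d\<bar> - d))"
    using assms by simp
  moreover have "0 \<le> c1 * (\<gamma> + k * (sin \<theta>)\<^sup>2)\<^sup>2" "0 \<le> 2 * c1 * \<bar>d\<bar>"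
    using assms by simp_all
  ultimately show ?thesis
    by linarith
qed

lemma energy_density_Abar:
  "energy_density c1 c2 k eS \<theta> (- k * (cos \<theta>)\<^sup>2) (k * sin \<theta> * cos \<theta>) (- k * (sin \<theta>)\<^sup>2) = eS"
proof -
  have "(sin \<theta>)\<^sup>2 + (cos \<theta>)\<^sup>2 = 1"
    by simp
  moreover have det: "- k * (cos \<theta>)\<^sup>2 * (- k * (sin \<theta>)\<^sup>2) - (k * sin \<theta> * cos \<theta>)\<^sup>2 = 0"
    by algebra
  ultimately show ?thesis
    unfolding energy_density_def det abs_zero by algebra
qed

lemma bdd_below_energy_density:
  assumes "c1 > 0" "c2 > 0"
  shows "bdd_below (range (energy_density c1 c2 k eS \<theta> \<alpha> \<beta>))"
  by (rule bdd_belowI2[OF energy_density_ge[OF assms]])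

lemma Qbar_le_energy_density:
  assumes "c1 > 0" "c2 > 0"
  shows "Qbar c1 c2 k eS \<theta> \<alpha> \<beta> \<le> energy_density c1 c2 k eS \<theta> \<alpha> \<beta> \<gamma>"
  unfolding Qbar_eq_INF_energy_density by (rule cINF_lower[OF bdd_below_energy_density[OF assms]]) simp

lemma Qbar_ge:
  assumes "c1 > 0" "c2 > 0"
  shows "eS + c1 * ((\<alpha> + k * (cos \<theta>)\<^sup>2)\<^sup>2 + 2 * (\<beta> - k * sin \<theta> * cos \<theta>)\<^sup>2)
    \<le> Qbar c1 c2 k eS \<theta> \<alpha> \<beta>"
  unfolding Qbar_eq_INF_energy_density by (rule cINF_greatest) (auto intro: energy_density_ge[OF assms])

lemma Qbar_eq_iff:
  assumes "c1 > 0" "c2 > 0"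
  shows "Qbar c1 c2 k eS \<theta> \<alpha> \<beta> = eS \<longleftrightarrow> \<alpha> = - k * (cos \<theta>)\<^sup>2 \<and> \<beta> = k * sin \<theta> * cos \<theta>"
proof
  assume "Qbar c1 c2 k eS \<theta> \<alpha> \<beta> = eS"
  then have "c1 * ((\<alpha> + k * (cos \<theta>)\<^sup>2)\<^sup>2 + 2 * (\<beta> - k * sin \<theta> * cos \<theta>)\<^sup>2) \<le> 0"
    using Qbar_ge[OF assms, of eS \<alpha> k \<theta> \<beta>] by linarith
  then have "(\<alpha> + k * (cos \<theta>)\<^sup>2)\<^sup>2 + 2 * (\<beta> - k * sin \<theta> * cos \<theta>)\<^sup>2 \<le> 0"
    using assms by (simp add: mult_le_0_iff)
  moreover have "0 \<le> (\<alpha> + k * (cos \<theta>)\<^sup>2)\<^sup>2" "0 \<le> (\<beta> - k * sin \<theta> * cos \<theta>)\<^sup>2"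
    by simp_all
  ultimately have "(\<alpha> + k * (cos \<theta>)\<^sup>2)\<^sup>2 = 0" "(\<beta> - k * sin \<theta> * cos \<theta>)\<^sup>2 = 0"
    by linarith+
  then show "\<alpha> = - k * (cos \<theta>)\<^sup>2 \<and> \<beta> = k * sin \<theta> * cos \<theta>"
    by simp
next
  assume "\<alpha> = - k * (cos \<theta>)\<^sup>2 \<and> \<beta> = k * sin \<theta> * cos \<theta>"
  then show "Qbar c1 c2 k eS \<theta> \<alpha> \<beta> = eS"
    using Qbar_le_energy_density[OF assms, of k eS \<theta> \<alpha> \<beta> "- k * (sin \<theta>)\<^sup>2"]
      Qbar_ge[OF assms, of eS \<alpha> k \<theta> \<beta>] energy_density_Abar
    by (simp add: antisym)
qed

lemma INF_Rats_eq_INF: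
  fixes f :: "real \<Rightarrow> real"
  assumes "continuous_on UNIV f" "bdd_below (range f)"
  shows "(INF q\<in>\<rat>. f q) = (INF x. f x)"
proof (rule antisym)
  let ?m = "INF q\<in>\<rat>. f q"
  have "bdd_below (f ` \<rat>)"
    using assms(2) by (meson bdd_below_mono image_mono subset_UNIV)
  then have "\<rat> \<subseteq> {x. ?m \<le> f x}"
    using cINF_lower by auto
  moreover have "closed {x. ?m \<le> f x}"
    using assms(1) by (intro closed_Collect_le continuous_intros)
  ultimately have "closure \<rat> \<subseteq> {x. ?m \<le> f x}"
    by (rule closure_minimal)
  then show "?m \<le> (INF x. f x)"
    by (intro cINF_greatest) (auto simp: Rats_closure_real)
  show "(INF x. f x) \<le> ?m"
    using assms(2) by (intro cINF_greatest cINF_lower) auto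
qed

lemma borel_measurable_Qbar [measurable]:
  assumes "c1 > 0" "c2 > 0"
    and [measurable]: "a \<in> borel_measurable M" "b \<in> borel_measurable M"
  shows "(\<lambda>x. Qbar c1 c2 k eS \<theta> (a x) (b x)) \<in> borel_measurable M"
proof -
  have "Qbar c1 c2 k eS \<theta> \<alpha> \<beta> = (INF q\<in>\<rat>. energy_density c1 c2 k eS \<theta> \<alpha> \<beta> q)" for \<alpha> \<beta>
    unfolding Qbar_eq_INF_energy_density
    by (rule INF_Rats_eq_INF[symmetric, OF _ bdd_below_energy_density[OF assms(1,2)]])
       (unfold energy_density_def, intro continuous_intros)
  then show ?thesis
    unfolding energy_density_def by (simp only:) (intro borel_measurable_cINF_real countable_rat; measurable)
qed

lemma Qbar_quadratic_growth:
  assumes "c1 > 0" "c2 > 0" "k > 0" "eS \<ge> 0"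
  shows "\<exists>C. \<forall>\<alpha> \<beta>. \<bar>Qbar c1 c2 k eS \<theta> \<alpha> \<beta>\<bar> \<le> C * (1 + \<alpha>\<^sup>2 + \<beta>\<^sup>2)"
proof (intro exI allI)
  fix \<alpha> \<beta> :: real
  define t where "t = 1 + \<alpha>\<^sup>2 + \<beta>\<^sup>2"
  define c where "c = c1 + c2"
  have abs_le_t: "\<bar>x\<bar> \<le> 1 + x\<^sup>2" for x :: real
    using zero_le_power2[of "\<bar>x\<bar> - 1"] by (simp add: power2_eq_square algebra_simps)
  have "\<bar>cos \<theta>\<bar> * \<bar>cos \<theta>\<bar> \<le> 1" "\<bar>sin \<theta>\<bar> * \<bar>cos \<theta>\<bar> \<le> 1"
    by (intro mult_le_one abs_sin_le_one abs_cos_le_one abs_ge_zero)+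
  then have "\<bar>\<alpha> * (cos \<theta>)\<^sup>2\<bar> \<le> \<bar>\<alpha>\<bar>" "\<bar>\<beta> * sin \<theta> * cos \<theta>\<bar> \<le> \<bar>\<beta>\<bar>"
    unfolding abs_mult power2_eq_square mult.assoc by (simp_all add: mult_left_le)
  then have "\<alpha> * (cos \<theta>)\<^sup>2 \<le> t" "- (\<beta> * sin \<theta> * cos \<theta>) \<le> t" "\<alpha> \<le> t" "\<alpha>\<^sup>2 \<le> t" "\<beta>\<^sup>2 \<le> t" "1 \<le> t"
    using abs_le_t[of \<alpha>] abs_le_t[of \<beta>] unfolding t_def by (smt (verit) zero_le_power2)+
  then have "c * \<alpha>\<^sup>2 \<le> c * t" "c * \<beta>\<^sup>2 \<le> c * t" "c1 * k * (\<alpha> * (cos \<theta>)\<^sup>2) \<le> c1 * k * t"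
      "c1 * k * (- (\<beta> * sin \<theta> * cos \<theta>)) \<le> c1 * k * t" "c2 * k * \<alpha> \<le> c2 * k * t"
      "c * k\<^sup>2 * 1 \<le> c * k\<^sup>2 * t" "eS * 1 \<le> eS * t"
    using assms unfolding c_def by (intro mult_left_mono; simp)+
  moreover have "energy_density c1 c2 k eS \<theta> \<alpha> \<beta> 0 = c * \<alpha>\<^sup>2 + 4 * (c * \<beta>\<^sup>2)
      + 2 * (c1 * k * (\<alpha> * (cos \<theta>)\<^sup>2)) + 4 * (c1 * k * (- (\<beta> * sin \<theta> * cos \<theta>)))
      + 2 * (c2 * k * \<alpha>) + c * k\<^sup>2 + eS"
    unfolding energy_density_def c_def by (simp add: algebra_simps)
  ultimately have "energy_density c1 c2 k eS \<theta> \<alpha> \<beta> 0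
      \<le> (5 * c + 6 * c1 * k + 2 * c2 * k + c * k\<^sup>2 + eS) * t"
    by (simp add: algebra_simps)
  moreover have "0 \<le> Qbar c1 c2 k eS \<theta> \<alpha> \<beta>"
    using Qbar_ge[OF assms(1,2), of eS \<alpha> k \<theta> \<beta>] assms by (smt (verit) mult_nonneg_nonneg zero_le_power2)
  ultimately show "\<bar>Qbar c1 c2 k eS \<theta> \<alpha> \<beta>\<bar> \<le> (5 * c + 6 * c1 * k + 2 * c2 * k + c * k\<^sup>2 + eS) * (1 + \<alpha>\<^sup>2 + \<beta>\<^sup>2)"
    using Qbar_le_energy_density[OF assms(1,2), of k eS \<theta> \<alpha> \<beta> 0] unfolding t_def by linarith
qed

lemma set_integrable_const:
  fixes c :: "'b::{banach, second_countable_topology}"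
  assumes "A \<in> sets M" "emeasure M A \<noteq> \<infinity>"
  shows "set_integrable M A (\<lambda>_. c)"
  using assms unfolding set_integrable_def
  by (intro integrable_scaleR_left integrable_real_indicator) (auto simp: less_top)

lemma set_integral_ge_const:
  fixes f :: "'a \<Rightarrow> real"
  assumes f: "set_integrable M A f" and A: "A \<in> sets M" "emeasure M A \<noteq> \<infinity>"
    and ge: "\<And>x. x \<in> A \<Longrightarrow> c \<le> f x"
  shows "c * measure M A \<le> (LINT x:A|M. f x)"
    and "(LINT x:A|M. f x) = c * measure M A \<longleftrightarrow> (AE x in M. x \<in> A \<longrightarrow> f x = c)"
proof -
  define g where "g x = indicator A x *\<^sub>R (f x - c)" for x
  have c: "set_integrable M A (\<lambda>_. c)"
    using A by (rule set_integrable_const)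
  have "integrable M g"
    using set_integral_diff(1)[OF f c] unfolding g_def set_integrable_def .
  moreover have "0 \<le> g x" for x
    using ge unfolding g_def by (simp add: indicator_def)
  moreover have "integral\<^sup>L M g = (LINT x:A|M. f x) - c * measure M A"
    using set_integral_diff(2)[OF f c] set_integral_const[OF A, of c]
    unfolding g_def set_lebesgue_integral_def[symmetric] by (simp add: mult.commute)
  ultimately show "c * measure M A \<le> (LINT x:A|M. f x)"
    and "(LINT x:A|M. f x) = c * measure M A \<longleftrightarrow> (AE x in M. x \<in> A \<longrightarrow> f x = c)"
    using integral_nonneg_eq_0_iff_AE[of M g] integral_nonneg_AE[of g M]
    by (auto simp: g_def indicator_def elim!: AE_mp)
qed

lemma norm_third_column_rotation_matrix:
  assumes "rotation_matrix (frame a b c)"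
  shows "norm c = 1"
proof -
  have "(transpose (frame a b c) ** frame a b c) $ 3 $ 3 = 1"
    using assms unfolding rotation_matrix_def orthogonal_matrix_def by (simp add: mat_def)
  then have "c \<bullet> c = 1"
    by (simp add: matrix_matrix_mult_def transpose_def frame_def sum_3 inner_vec_def)
  then show ?thesis
    by (simp add: norm_eq_sqrt_inner)
qed

lemma intI_measure:
  assumes "l > 0"
  shows "intI l \<in> sets lebesgue" "emeasure lebesgue (intI l) \<noteq> \<infinity>" "measure lebesgue (intI l) = l"
  using assms by (auto simp: intI_def)

lemma set_integrable_Qbar_strains:
  assumes c: "c1 > 0" "c2 > 0" "k > 0" "eS \<ge> 0" and l: "l > 0"
    and adm: "admissible l d1 d2 d3 d1' d2' d3'"
  shows "set_integrable lebesgue (intI l) (\<lambda>x. Qbar c1 c2 k eS \<theta> (d1' x \<bullet> d3 x) (d2' x \<bullet> d3 x))"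
proof -
  let ?I = "intI l"
  have I[measurable]: "?I \<in> sets lebesgue"
    using intI_measure[OF l] by simp
  have L2: "L2_on ?I d1'" "L2_on ?I d2'" "L2_on ?I d3"
    using adm unfolding admissible_def W12_with_deriv_def by auto
  have restrict_iff: "set_borel_measurable lebesgue ?I f \<longleftrightarrow> f \<in> borel_measurable (restrict_space lebesgue ?I)"
    for f :: "real \<Rightarrow> 'b::real_normed_vector"
    unfolding set_borel_measurable_def by (simp add: borel_measurable_restrict_space_iff)
  have [measurable]: "d1' \<in> borel_measurable (restrict_space lebesgue ?I)"
      "d2' \<in> borel_measurable (restrict_space lebesgue ?I)" "d3 \<in> borel_measurable (restrict_space lebesgue ?I)"
    using L2 unfolding L2_on_def restrict_iff by auto
  have "set_borel_measurable lebesgue ?I (\<lambda>x. Qbar c1 c2 k eS \<theta> (d1' x \<bullet> d3 x) (d2' x \<bullet> d3 x))"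
    unfolding restrict_iff using c by measurable
  moreover obtain C where C: "\<And>\<alpha> \<beta>. \<bar>Qbar c1 c2 k eS \<theta> \<alpha> \<beta>\<bar> \<le> C * (1 + \<alpha>\<^sup>2 + \<beta>\<^sup>2)"
    using Qbar_quadratic_growth[OF c] by blast
  moreover have "set_integrable lebesgue ?I (\<lambda>x. C + C * (norm (d1' x))\<^sup>2 + C * (norm (d2' x))\<^sup>2)"
    using L2 set_integrable_const[OF intI_measure(1,2)[OF l]] unfolding L2_on_def
    by (intro set_integral_add set_integrable_mult_right) auto
  moreover have "\<bar>Qbar c1 c2 k eS \<theta> (d1' x \<bullet> d3 x) (d2' x \<bullet> d3 x)\<bar>
      \<le> \<bar>C + C * (norm (d1' x))\<^sup>2 + C * (norm (d2' x))\<^sup>2\<bar>" if "norm (d3 x) = 1" for x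
  proof -
    have "(d x \<bullet> d3 x)\<^sup>2 \<le> (norm (d x))\<^sup>2" for d :: "real \<Rightarrow> real^3"
      using Cauchy_Schwarz_ineq2[of "d x" "d3 x"] that abs_le_square_iff[of "d x \<bullet> d3 x" "norm (d x)"]
      by simp
    moreover have "0 \<le> C"
      using C[of 0 0] by simp
    ultimately have "C * (1 + (d1' x \<bullet> d3 x)\<^sup>2 + (d2' x \<bullet> d3 x)\<^sup>2) \<le> C + C * (norm (d1' x))\<^sup>2 + C * (norm (d2' x))\<^sup>2"
      by (simp add: distrib_left add_mono mult_left_mono)
    then show ?thesis
      using C by (smt (verit))
  qed
  moreover have "AE x in lebesgue. x \<in> ?I \<longrightarrow> norm (d3 x) = 1"
    using adm unfolding admissible_def by (auto elim!: eventually_mono intro: norm_third_column_rotation_matrix)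
  ultimately show ?thesis
    by (elim set_integrable_bound) (auto elim!: eventually_mono)
qed

lemma JS_ge_and_eq_iff:
  assumes "c1 > 0" "c2 > 0" "k > 0" "eS \<ge> 0" "l > 0" "admissible l d1 d2 d3 d1' d2' d3'"
  shows "l * eS \<le> JS c1 c2 k eS \<theta> l d1' d2' d3"
  and "JS c1 c2 k eS \<theta> l d1' d2' d3 = l * eS \<longleftrightarrow>
    (AE x in lebesgue. x \<in> intI l \<longrightarrow> d1' x \<bullet> d3 x = - k * (cos \<theta>)\<^sup>2 \<and> d2' x \<bullet> d3 x = k * sin \<theta> * cos \<theta>)"
proof -
  note ge = set_integral_ge_const[OF set_integrable_Qbar_strains[OF assms] intI_measure(1,2)[OF assms(5)]]
  have "eS \<le> Qbar c1 c2 k eS \<theta> \<alpha> \<beta>" for \<alpha> \<beta>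
    using Qbar_ge[OF assms(1,2), of eS \<alpha> k \<theta> \<beta>] assms(1) by (smt (verit) mult_nonneg_nonneg zero_le_power2)
  note ge = ge[OF this, unfolded intI_measure(3)[OF assms(5)] mult.commute[of eS] JS_def[symmetric]]
  show "l * eS \<le> JS c1 c2 k eS \<theta> l d1' d2' d3"
    by (rule ge(1))
  show "JS c1 c2 k eS \<theta> l d1' d2' d3 = l * eS \<longleftrightarrow>
    (AE x in lebesgue. x \<in> intI l \<longrightarrow> d1' x \<bullet> d3 x = - k * (cos \<theta>)\<^sup>2 \<and> d2' x \<bullet> d3 x = k * sin \<theta> * cos \<theta>)"
    unfolding ge(2) Qbar_eq_iff[OF assms(1,2)] ..
qed

lemma set_integrable_continuous_bounded:
  fixes g :: "real \<Rightarrow> 'a::euclidean_space"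
  assumes "continuous_on UNIV g" "bounded K" "K \<in> sets lebesgue"
  shows "set_integrable lebesgue K g"
proof -
  obtain r where "K \<subseteq> {-r..r}"
    using bounded_subset_cbox_symmetric[OF assms(2)] by auto
  moreover have "set_integrable lebesgue {-r..r} g"
    using absolutely_integrable_continuous_real continuous_on_subset[OF assms(1)] by blast
  ultimately show ?thesis
    using set_integrable_subset assms(3) by blast
qed

lemma test_fun_integration_by_parts:
  fixes u u' :: "real \<Rightarrow> 'a::euclidean_space"
  assumes "a \<le> b" and u: "\<And>x. (u has_vector_derivative u' x) (at x)" "continuous_on UNIV u'"
    and \<phi>: "test_fun {a<..<b} \<phi>"
  shows "(LINT x:{a<..<b}|lebesgue. deriv \<phi> x *\<^sub>R u x) = - (LINT x:{a<..<b}|lebesgue. \<phi> x *\<^sub>R u' x)"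
proof -
  obtain D where "D 0 = \<phi>" and D: "\<And>n x. (D n has_real_derivative D (Suc n) x) (at x)"
    using \<phi> unfolding test_fun_def smooth_fun_def by blast
  then have \<phi>': "\<And>x. (\<phi> has_real_derivative D 1 x) (at x)"
    by (metis One_nat_def)
  have "continuous_on UNIV \<phi>" "continuous_on UNIV (D 1)" "continuous_on UNIV u"
    using \<phi>' D[of 1] u(1) by (auto intro: DERIV_continuous_on continuous_on_vector_derivative)
  then have int: "set_integrable lebesgue {a<..<b} (\<lambda>x. \<phi> x *\<^sub>R u' x)"
      "set_integrable lebesgue {a<..<b} (\<lambda>x. D 1 x *\<^sub>R u x)"
    using u(2) by (auto intro!: set_integrable_continuous_bounded continuous_intros)
  have "\<phi> a = 0" "\<phi> b = 0"
    using \<phi> closure_subset[of "{x. \<phi> x \<noteq> 0}"] unfolding test_fun_def by auto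
  moreover have "((\<lambda>x. \<phi> x *\<^sub>R u x) has_vector_derivative \<phi> x *\<^sub>R u' x + D 1 x *\<^sub>R u x)
      (at x within {a..b})" for x
    using has_vector_derivative_scaleR[OF \<phi>' u(1)] by (simp add: has_vector_derivative_at_within)
  ultimately have "((\<lambda>x. \<phi> x *\<^sub>R u' x + D 1 x *\<^sub>R u x) has_integral 0) {a..b}"
    using fundamental_theorem_of_calculus[OF \<open>a \<le> b\<close>] by fastforce
  then have "(LINT x:{a<..<b}|lebesgue. \<phi> x *\<^sub>R u' x + D 1 x *\<^sub>R u x) = 0"
    using set_lebesgue_integral_eq_integral(2)[OF set_integral_add(1)[OF int]]
    by (simp add: integral_open_interval_real[symmetric] integral_unique)
  moreover have "deriv \<phi> = D 1"
    using \<phi>' DERIV_imp_deriv by blast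
  ultimately show ?thesis
    using set_integral_add(2)[OF int] by (simp add: eq_neg_iff_add_eq_0 add.commute)
qed

lemma W12_with_deriv_C1:
  fixes u u' :: "real \<Rightarrow> 'a::euclidean_space"
  assumes "a \<le> b" and u: "\<And>x. (u has_vector_derivative u' x) (at x)" "continuous_on UNIV u'"
  shows "W12_with_deriv {a<..<b} u u'"
proof -
  have cont_u: "continuous_on UNIV u"
    using u(1) by (auto intro: continuous_on_vector_derivative has_vector_derivative_at_within)
  have L2: "L2_on {a<..<b} g" if "continuous_on UNIV g" for g :: "real \<Rightarrow> 'a"
  proof -
    have "set_integrable lebesgue {a<..<b} g" "set_integrable lebesgue {a<..<b} (\<lambda>x. (norm (g x))\<^sup>2)"
      using that by (auto intro!: set_integrable_continuous_bounded continuous_intros)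
    then show ?thesis
      unfolding L2_on_def set_integrable_def set_borel_measurable_def by simp
  qed
  have "has_weak_deriv_on {a<..<b} u u'"
    unfolding has_weak_deriv_on_def
    using cont_u u test_fun_integration_by_parts[OF assms]
    by (auto intro!: set_integrable_continuous_bounded simp: compact_imp_bounded borel_compact)
  then show ?thesis
    unfolding W12_with_deriv_def using L2 cont_u u(2) by blast
qed

definition vec3 :: "real \<Rightarrow> real \<Rightarrow> real \<Rightarrow> real^3" where
  "vec3 a b c = a *\<^sub>R axis 1 1 + b *\<^sub>R axis 2 1 + c *\<^sub>R axis 3 1"

lemma vec3_nth [simp]: "vec3 a b c $ 1 = a" "vec3 a b c $ 2 = b" "vec3 a b c $ 3 = c"
  by (simp_all add: vec3_def axis_def)

lemma inner_vec3 [simp]: "vec3 a b c \<bullet> vec3 a' b' c' = a * a' + b * b' + c * c'"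
  by (simp add: inner_vec_def sum_3)

lemma has_vector_derivative_vec3:
  assumes "(f has_real_derivative f') (at x)" "(g has_real_derivative g') (at x)"
    "(h has_real_derivative h') (at x)"
  shows "((\<lambda>x. vec3 (f x) (g x) (h x)) has_vector_derivative vec3 f' g' h') (at x)"
  unfolding vec3_def using assms
  by (auto intro!: derivative_eq_intros simp: has_real_derivative_iff_has_vector_derivative)

lemma continuous_on_vec3:
  assumes "continuous_on S f" "continuous_on S g" "continuous_on S h"
  shows "continuous_on S (\<lambda>x. vec3 (f x) (g x) (h x))"
  unfolding vec3_def by (intro continuous_intros assms)

lemma rotation_matrix_frame:
  assumes "a \<bullet> a = 1" "b \<bullet> b = 1" "c \<bullet> c = 1" "a \<bullet> b = 0" "a \<bullet> c = 0" "b \<bullet> c = 0"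
    and "det (frame a b c) = 1"
  shows "rotation_matrix (frame a b c)"
  unfolding rotation_matrix_def orthogonal_matrix
  using assms by (simp add: vec_eq_iff forall_3 matrix_matrix_mult_def transpose_def frame_def mat_def
      sum_3 inner_vec_def mult.commute)

text \<open>The standard basis rotated by the angle \<open>w x\<close> about the unit axis \<open>(s, c, 0)\<close>
  (Rodrigues' formula), and the derivatives of its three vectors.\<close>

definition "spin1 s c w x =
  vec3 (cos (w * x) + s\<^sup>2 * (1 - cos (w * x))) (s * c * (1 - cos (w * x))) (- c * sin (w * x))"
definition "spin2 s c w x =
  vec3 (s * c * (1 - cos (w * x))) (cos (w * x) + c\<^sup>2 * (1 - cos (w * x))) (s * sin (w * x))"
definition "spin3 s c w x = vec3 (c * sin (w * x)) (- s * sin (w * x)) (cos (w * x))"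
definition "spin1' s c w x =
  vec3 (- w * sin (w * x) + s\<^sup>2 * w * sin (w * x)) (s * c * w * sin (w * x)) (- c * w * cos (w * x))"
definition "spin2' s c w x =
  vec3 (s * c * w * sin (w * x)) (- w * sin (w * x) + c\<^sup>2 * w * sin (w * x)) (s * w * cos (w * x))"
definition "spin3' s c w x = vec3 (c * w * cos (w * x)) (- s * w * cos (w * x)) (- w * sin (w * x))"

lemma has_vector_derivative_spin:
  "(spin1 s c w has_vector_derivative spin1' s c w x) (at x)"
  "(spin2 s c w has_vector_derivative spin2' s c w x) (at x)"
  "(spin3 s c w has_vector_derivative spin3' s c w x) (at x)"
  unfolding spin1_def spin2_def spin3_def spin1'_def spin2'_def spin3'_def
  by (rule has_vector_derivative_vec3; auto intro!: derivative_eq_intros simp: algebra_simps)+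

lemma continuous_on_spin':
  "continuous_on UNIV (spin1' s c w)" "continuous_on UNIV (spin2' s c w)"
  "continuous_on UNIV (spin3' s c w)"
  unfolding spin1'_def spin2'_def spin3'_def by (intro continuous_on_vec3 continuous_intros)+

lemma rotation_matrix_spin:
  assumes "s\<^sup>2 + c\<^sup>2 = 1"
  shows "rotation_matrix (frame (spin1 s c w x) (spin2 s c w x) (spin3 s c w x))"
proof (rule rotation_matrix_frame)
  have "(sin (w * x))\<^sup>2 + (cos (w * x))\<^sup>2 = 1"
    by simp
  note trig = assms this
  show "spin1 s c w x \<bullet> spin1 s c w x = 1" "spin2 s c w x \<bullet> spin2 s c w x = 1"
    "spin3 s c w x \<bullet> spin3 s c w x = 1" "spin1 s c w x \<bullet> spin2 s c w x = 0"
    "spin1 s c w x \<bullet> spin3 s c w x = 0" "spin2 s c w x \<bullet> spin3 s c w x = 0"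
    unfolding spin1_def spin2_def spin3_def inner_vec3 using trig by algebra+
  show "det (frame (spin1 s c w x) (spin2 s c w x) (spin3 s c w x)) = 1"
    unfolding det_3 by (simp add: frame_def spin1_def spin2_def spin3_def; use trig in algebra)
qed

lemma spin_strains:
  assumes "s\<^sup>2 + c\<^sup>2 = 1"
  shows "spin1' s c w x \<bullet> spin2 s c w x = 0" "spin1' s c w x \<bullet> spin3 s c w x = - w * c"
    "spin2' s c w x \<bullet> spin3 s c w x = w * s"
proof -
  have "(sin (w * x))\<^sup>2 + (cos (w * x))\<^sup>2 = 1"
    by simp
  with assms show "spin1' s c w x \<bullet> spin2 s c w x = 0" "spin1' s c w x \<bullet> spin3 s c w x = - w * c"
    "spin2' s c w x \<bullet> spin3 s c w x = w * s"
    unfolding spin1'_def spin2'_def spin2_def spin3_def inner_vec3 by algebra+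
qed

lemma admissible_spin:
  assumes "l > 0" "s\<^sup>2 + c\<^sup>2 = 1"
  shows "admissible l (spin1 s c w) (spin2 s c w) (spin3 s c w) (spin1' s c w) (spin2' s c w) (spin3' s c w)"
  unfolding admissible_def intI_def
  using assms has_vector_derivative_spin continuous_on_spin'
  by (auto intro!: W12_with_deriv_C1 simp: rotation_matrix_spin spin_strains)

theorem mainTheorem11:
  fixes c1 c2 k eS \<theta> l :: real
  assumes "c1 > 0" and "c2 > 0" and "k > 0" and "eS \<ge> 0"
    and "0 \<le> \<theta>" and "\<theta> < pi" and "l > 0"
  shows "(\<exists>d1 d2 d3 d1' d2' d3'. admissible l d1 d2 d3 d1' d2' d3'
            \<and> JS c1 c2 k eS \<theta> l d1' d2' d3 = l * eS)
       \<and> (\<forall>d1 d2 d3 d1' d2' d3'. admissible l d1 d2 d3 d1' d2' d3'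
            \<longrightarrow> JS c1 c2 k eS \<theta> l d1' d2' d3 \<ge> l * eS)
       \<and> (\<forall>d1 d2 d3 d1' d2' d3'. admissible l d1 d2 d3 d1' d2' d3'
            \<longrightarrow> (JS c1 c2 k eS \<theta> l d1' d2' d3 = l * eS \<longleftrightarrow>
                 (AE x in lebesgue. x \<in> intI l \<longrightarrow>
                    d1' x \<bullet> d3 x = k / 2 * (- 1 - cos (2 * \<theta>))
                    \<and> d2' x \<bullet> d3 x = k / 2 * sin (2 * \<theta>))))"
proof -
  note params = assms(1-4,7)
  have double_angle: "k / 2 * (- 1 - cos (2 * \<theta>)) = - k * (cos \<theta>)\<^sup>2"
      "k / 2 * sin (2 * \<theta>) = k * sin \<theta> * cos \<theta>"
    unfolding cos_double_cos sin_double by (simp_all add: algebra_simps)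
  let ?s = "sin \<theta>" and ?c = "cos \<theta>" and ?w = "k * cos \<theta>"
  have adm: "admissible l (spin1 ?s ?c ?w) (spin2 ?s ?c ?w) (spin3 ?s ?c ?w)
      (spin1' ?s ?c ?w) (spin2' ?s ?c ?w) (spin3' ?s ?c ?w)"
    using admissible_spin[OF assms(7)] by simp
  moreover have "JS c1 c2 k eS \<theta> l (spin1' ?s ?c ?w) (spin2' ?s ?c ?w) (spin3 ?s ?c ?w) = l * eS"
    unfolding JS_ge_and_eq_iff(2)[OF params adm]
    by (intro AE_I2) (simp add: spin_strains[OF sin_cos_squared_add] power2_eq_square)
  ultimately show ?thesis
    unfolding double_angle using JS_ge_and_eq_iff[OF params] by blast
qed

end
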